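(* Let $G$ be a finite non-abelian group, $g\in G$, and let $\mathfrak{M}_g$ be the set of maximal subgroups $M$ of $G$ with $g^G\cap M\neq\emptyset$. Assume that for every $M\in\mathfrak{M}_g$ there exists $m\in M$ such that $g^G\cap M\subseteq m^M\subseteq g^G$. If $g^G$ is of type D, then there exist $N\in\mathfrak{M}_g$ and $n\in N$ such that $n^N$ is of type D.
   Context: For $h$ in a group $H$, $h^H$ denotes the conjugacy class of $h$ in $H$. A conjugacy class $\mathcal{O}$ of a group (regarded as a rack with $x\triangleright y=xyx^{-1}$) is of type D iff there exist $r,s\in\mathcal{O}$ with $(rs)^2\neq(sr)^2$ such that $r$ and $s$ are not conjugate in the subgroup $\langle r,s\rangle$. (In rack terms: a rack is of type D if it contains a subrack that is a disjoint union $R\sqcup S$ of two subracks with $r\triangleright(s\triangleright(r\triangleright s))\neq s$ for some $r\in R$, $s\in S$.) *)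

theory Defs
  imports "HOL-Algebra.Algebra"
begin

definition conj_class :: "('a, 'b) monoid_scheme \<Rightarrow> 'a set \<Rightarrow> 'a \<Rightarrow> 'a set" where
  "conj_class G H h = {x \<otimes>\<^bsub>G\<^esub> h \<otimes>\<^bsub>G\<^esub> inv\<^bsub>G\<^esub> x | x. x \<in> H}"

definition maximal_subgroup :: "'a set \<Rightarrow> ('a, 'b) monoid_scheme \<Rightarrow> bool" where
  "maximal_subgroup M G \<longleftrightarrow> subgroup M G \<and> M \<noteq> carrier G \<and>
     (\<forall>H. subgroup H G \<and> M \<subseteq> H \<longrightarrow> H = M \<or> H = carrier G)"

definition type_D :: "('a, 'b) monoid_scheme \<Rightarrow> 'a set \<Rightarrow> bool" where
  "type_D G C \<longleftrightarrow> (\<exists>r\<in>C. \<exists>s\<in>C.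
     (r \<otimes>\<^bsub>G\<^esub> s) \<otimes>\<^bsub>G\<^esub> (r \<otimes>\<^bsub>G\<^esub> s) \<noteq> (s \<otimes>\<^bsub>G\<^esub> r) \<otimes>\<^bsub>G\<^esub> (s \<otimes>\<^bsub>G\<^esub> r) \<and>
     s \<notin> conj_class G (generate G {r, s}) r)"

end

theory Submission
  imports Defs
begin

text \<open>Let \<open>r, s \<in> g\<^sup>G\<close> witness that \<open>g\<^sup>G\<close> is of type D. Since \<open>r\<close> and \<open>s\<close> are
  conjugate in \<open>G\<close> but not in \<open>\<langle>r, s\<rangle>\<close>, the subgroup \<open>\<langle>r, s\<rangle>\<close> is proper and so lies in
  a maximal subgroup \<open>M\<close>, which then meets \<open>g\<^sup>G\<close>. The hypothesis gives \<open>m \<in> M\<close> with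
  \<open>g\<^sup>G \<inter> M \<subseteq> m\<^sup>M\<close>; thus \<open>r, s \<in> m\<^sup>M\<close>, and the same pair shows that \<open>m\<^sup>M\<close> is of type D.\<close>

lemma (in group) conj_class_conjugate:
  assumes "subgroup H G" "g \<in> carrier G"
    and "r \<in> conj_class G H g" "s \<in> conj_class G H g"
  shows "s \<in> conj_class G H r"
proof -
  obtain y where y: "y \<in> H" "r = y \<otimes> g \<otimes> inv y"
    using assms(3) unfolding conj_class_def by blast
  obtain z where z: "z \<in> H" "s = z \<otimes> g \<otimes> inv z"
    using assms(4) unfolding conj_class_def by blast
  have yz: "y \<in> carrier G" "z \<in> carrier G"
    using y(1) z(1) subgroup.mem_carrier[OF assms(1)] by auto
  have cancel: "inv y \<otimes> (y \<otimes> w) = w" if "w \<in> carrier G" for w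
    using yz that by (simp add: m_assoc[symmetric])
  have "(z \<otimes> inv y) \<otimes> r \<otimes> inv (z \<otimes> inv y) = z \<otimes> g \<otimes> inv z"
    using yz assms(2) by (simp add: y(2) inv_mult_group m_assoc cancel)
  moreover have "z \<otimes> inv y \<in> H"
    using y(1) z(1) assms(1) by (simp add: subgroup.m_closed subgroup.m_inv_closed)
  ultimately show ?thesis
    unfolding conj_class_def z(2) by (intro CollectI exI[of _ "z \<otimes> inv y"]) simp
qed

lemma (in group) proper_subgroup_le_maximal_subgroup:
  assumes "finite (carrier G)" "subgroup H G" "H \<noteq> carrier G"
  shows "\<exists>M. maximal_subgroup M G \<and> H \<subseteq> M"
proof -
  define S where "S = {K. subgroup K G \<and> K \<noteq> carrier G}"
  have "S \<subseteq> Pow (carrier G)" unfolding S_def by (auto dest: subgroup.subset)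
  moreover have "finite (Pow (carrier G))" using assms(1) by simp
  ultimately have "finite S" by (rule finite_subset)
  moreover have "H \<in> S" unfolding S_def using assms(2,3) by simp
  ultimately obtain M where "M \<in> S" "H \<subseteq> M" "\<forall>K \<in> S. M \<subseteq> K \<longrightarrow> M = K"
    by (meson finite_has_maximal2)
  then have "maximal_subgroup M G"
    unfolding maximal_subgroup_def S_def by auto
  with \<open>H \<subseteq> M\<close> show ?thesis by blast
qed

lemma (in group) generate_ne_carrier_if_not_conj:
  assumes "g \<in> carrier G" "r \<in> conj_class G (carrier G) g" "s \<in> conj_class G (carrier G) g"
    and "s \<notin> conj_class G (generate G {r, s}) r"
  shows "generate G {r, s} \<noteq> carrier G"
  using conj_class_conjugate[OF subgroup_self assms(1-3)] assms(4) by auto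

theorem lemma2p4:
  fixes G (structure) and g
  assumes "group G" and "finite (carrier G)"
    and "\<not> comm_group G"
    and "g \<in> carrier G"
    and "\<forall>M. maximal_subgroup M G \<and> conj_class G (carrier G) g \<inter> M \<noteq> {} \<longrightarrow>
           (\<exists>m\<in>M. conj_class G (carrier G) g \<inter> M \<subseteq> conj_class G M m \<and>
                   conj_class G M m \<subseteq> conj_class G (carrier G) g)"
    and "type_D G (conj_class G (carrier G) g)"
  shows "\<exists>N n. maximal_subgroup N G \<and> conj_class G (carrier G) g \<inter> N \<noteq> {} \<and>
           n \<in> N \<and> type_D G (conj_class G N n)"
proof -
  interpret group G by fact
  let ?C = "conj_class G (carrier G) g"
  obtain r s where r: "r \<in> ?C" and s: "s \<in> ?C"
    and not_commuting: "(r \<otimes> s) \<otimes> (r \<otimes> s) \<noteq> (s \<otimes> r) \<otimes> (s \<otimes> r)"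
    and not_conj: "s \<notin> conj_class G (generate G {r, s}) r"
    using assms(6) unfolding type_D_def by blast
  have "r \<in> carrier G" "s \<in> carrier G"
    using r s assms(4) unfolding conj_class_def by auto
  then have "subgroup (generate G {r, s}) G" by (intro generate_is_subgroup) auto
  moreover have "generate G {r, s} \<noteq> carrier G"
    using generate_ne_carrier_if_not_conj[OF assms(4) r s not_conj] .
  ultimately obtain M where M: "maximal_subgroup M G" "generate G {r, s} \<subseteq> M"
    using proper_subgroup_le_maximal_subgroup[OF assms(2)] by blast
  then have rs_M: "r \<in> M" "s \<in> M" by (auto intro: generate.incl)
  then have meets: "?C \<inter> M \<noteq> {}" using r by blast
  then obtain m where m: "m \<in> M" and absorbs: "?C \<inter> M \<subseteq> conj_class G M m"
    using assms(5) M(1) by blast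
  have "type_D G (conj_class G M m)"
    unfolding type_D_def using absorbs r s rs_M not_commuting not_conj by blast
  with M(1) meets m show ?thesis by blast
qed

end
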